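(* There is an absolute constant $c>0$ such that for any two-prover game $\mathcal{G}$ and integers $k\ge2$, $l\ge 1$ with $kl\le|X|,|Y|$: if $opt^{r}_{Las}(\mathcal{G})=1$ for some $r\ge kl$, then $opt^{\lfloor cr/l\rfloor}_{Las}(\mathcal{G}^l_k)=1$.
   Context: A two-prover game $\mathcal{G}=(X,Y,\mathcal{Q},\Sigma_X,\Sigma_Y,\{P_{(x,y)}\})$ is viewed as a 2-CSP on variable set $X\cup Y$ (variables in $X$ take values in $\Sigma_X$, in $Y$ in $\Sigma_Y$) with distribution $\mathcal{Q}$ and predicates $P_{(x,y)}$. The instance $\mathcal{G}^l_k$ is the Max $k$-CSP whose variables are pairs $(S,T)\in\binom{X}{l}\times\binom{Y}{l}$, whose alphabet $\Sigma_X^l\times\Sigma_Y^l$ is identified with assignments to $S\cup T$, with uniform distribution on $k$-tuples of variables, and predicate on $((S_1,T_1),\dots,(S_k,T_k))$ equal to $1$ iff the assignments are mutually consistent and the combined assignment satisfies $P_{(x,y)}$ for every $(x,y)\in((\cup_jS_j)\times(\cup_jT_j))\cap\mathrm{supp}(\mathcal{Q})$, else $0$. For a CSP with variable set $V$ and distribution $\mathcal{W}$ over constraint tuples, an $r$-level Lasserre solution is a family of vectors $U_{(S,\phi_S)}$ for $S\subseteq V$, $|S|\le r$, $\phi_S$ an assignment to $S$, with: all inner products nonnegative; $\langle U_{(S_1,\phi_1)},U_{(S_2,\phi_2)}\rangle=\langle U_{(S_3,\phi_3)},U_{(S_4,\phi_4)}\rangle$ whenever $S_1\cup S_2=S_3\cup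 S_4$ and $\phi_1\circ\phi_2=\phi_3\circ\phi_4$; inner product $0$ when $\phi_1,\phi_2$ disagree on a common variable; $\sum_{\sigma}\|U_{(\{x\},x\mapsto\sigma)}\|^2=1$ for each $x$; $\|U_{(\emptyset,\emptyset)}\|=1$. Its value is $\mathbb{E}_{S\sim\mathcal{W}}[\sum_{\phi_S}\|U_{(S,\phi_S)}\|^2P_S(\phi_S)]$, and $opt^r_{Las}$ is the maximum value over $r$-level solutions.
   Formalization: The hypotheses also include $k \le \lfloor cr/l\rfloor$, so the conclusion is claimed only at levels of at least k, and the uniformly drawn k-tuples of variables of $\mathcal{G}^l_k$ may repeat a variable. Each condition added here is assumed in the paper as well or is needed for the statement above to hold. *)

theory Defs
  imports "HOL-Probability.Probability"
begin

text \<open>A CSP is given by a variable set V, an alphabet dom v for each variable,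
a distribution W over constraint labels, a scope (set of variables) of each
constraint label and a predicate on assignments to the scope.\<close>

definition assignments :: "'v set \<Rightarrow> ('v \<Rightarrow> 'a set) \<Rightarrow> ('v \<rightharpoonup> 'a) set" where
  "assignments S alph = {\<phi>. dom \<phi> = S \<and> (\<forall>v\<in>S. the (\<phi> v) \<in> alph v)}"

definition consistent :: "('v \<rightharpoonup> 'a) \<Rightarrow> ('v \<rightharpoonup> 'a) \<Rightarrow> bool" where
  "consistent \<phi> \<psi> \<longleftrightarrow> (\<forall>v \<in> dom \<phi> \<inter> dom \<psi>. \<phi> v = \<psi> v)"

text \<open>Vectors are elements of R^d, represented as functions nat => real whose
coordinates below d are relevant.\<close>

definition ip :: "nat \<Rightarrow> (nat \<Rightarrow> real) \<Rightarrow> (nat \<Rightarrow> real) \<Rightarrow> real" where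
  "ip d u w = (\<Sum>i<d. u i * w i)"

definition las_index :: "nat \<Rightarrow> 'v set \<Rightarrow> ('v \<Rightarrow> 'a set) \<Rightarrow> ('v set \<times> ('v \<rightharpoonup> 'a)) set" where
  "las_index r V alph = {(S, \<phi>). S \<subseteq> V \<and> finite S \<and> card S \<le> r \<and> \<phi> \<in> assignments S alph}"

definition lasserre_solution ::
  "nat \<Rightarrow> 'v set \<Rightarrow> ('v \<Rightarrow> 'a set) \<Rightarrow> nat \<Rightarrow> ('v set \<Rightarrow> ('v \<rightharpoonup> 'a) \<Rightarrow> nat \<Rightarrow> real) \<Rightarrow> bool" where
  "lasserre_solution r V alph d U \<longleftrightarrow>
     (\<forall>(S1,\<phi>1)\<in>las_index r V alph. \<forall>(S2,\<phi>2)\<in>las_index r V alph.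
         ip d (U S1 \<phi>1) (U S2 \<phi>2) \<ge> 0) \<and>
     (\<forall>(S1,\<phi>1)\<in>las_index r V alph. \<forall>(S2,\<phi>2)\<in>las_index r V alph.
      \<forall>(S3,\<phi>3)\<in>las_index r V alph. \<forall>(S4,\<phi>4)\<in>las_index r V alph.
         S1 \<union> S2 = S3 \<union> S4 \<and> consistent \<phi>1 \<phi>2 \<and> consistent \<phi>3 \<phi>4 \<and>
         \<phi>1 ++ \<phi>2 = \<phi>3 ++ \<phi>4 \<longrightarrow>
         ip d (U S1 \<phi>1) (U S2 \<phi>2) = ip d (U S3 \<phi>3) (U S4 \<phi>4)) \<and>
     (\<forall>(S1,\<phi>1)\<in>las_index r V alph. \<forall>(S2,\<phi>2)\<in>las_index r V alph.
         \<not> consistent \<phi>1 \<phi>2 \<longrightarrow> ip d (U S1 \<phi>1) (U S2 \<phi>2) = 0) \<and>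
     (\<forall>x\<in>V. (\<Sum>\<sigma>\<in>alph x. ip d (U {x} [x \<mapsto> \<sigma>]) (U {x} [x \<mapsto> \<sigma>])) = 1) \<and>
     ip d (U {} Map.empty) (U {} Map.empty) = 1"

definition las_value ::
  "('v \<Rightarrow> 'a set) \<Rightarrow> 'c pmf \<Rightarrow> ('c \<Rightarrow> 'v set) \<Rightarrow> ('c \<Rightarrow> ('v \<rightharpoonup> 'a) \<Rightarrow> bool)
   \<Rightarrow> nat \<Rightarrow> ('v set \<Rightarrow> ('v \<rightharpoonup> 'a) \<Rightarrow> nat \<Rightarrow> real) \<Rightarrow> real" where
  "las_value alph W scope pred d U =
     measure_pmf.expectation W (\<lambda>c.
        \<Sum>\<phi>\<in>assignments (scope c) alph.
           ip d (U (scope c) \<phi>) (U (scope c) \<phi>) * (if pred c \<phi> then 1 else 0))"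

definition opt_las ::
  "nat \<Rightarrow> 'v set \<Rightarrow> ('v \<Rightarrow> 'a set) \<Rightarrow> 'c pmf \<Rightarrow> ('c \<Rightarrow> 'v set)
   \<Rightarrow> ('c \<Rightarrow> ('v \<rightharpoonup> 'a) \<Rightarrow> bool) \<Rightarrow> real" where
  "opt_las r V alph W scope pred =
     Sup {las_value alph W scope pred d U | d U. lasserre_solution r V alph d U}"

definition two_prover_game ::
  "'x set \<Rightarrow> 'y set \<Rightarrow> ('x \<times> 'y) pmf \<Rightarrow> 'a set \<Rightarrow> 'b set \<Rightarrow> bool" where
  "two_prover_game X Y Q SX SY \<longleftrightarrow>
     finite X \<and> finite Y \<and> X \<noteq> {} \<and> Y \<noteq> {} \<and> finite SX \<and> finite SY \<and>
     SX \<noteq> {} \<and> SY \<noteq> {} \<and> set_pmf Q \<subseteq> X \<times> Y"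

definition game_vars :: "'x set \<Rightarrow> 'y set \<Rightarrow> ('x + 'y) set" where
  "game_vars X Y = Inl ` X \<union> Inr ` Y"

definition game_dom :: "'a set \<Rightarrow> 'b set \<Rightarrow> ('x + 'y) \<Rightarrow> ('a + 'b) set" where
  "game_dom SX SY v = (case v of Inl _ \<Rightarrow> Inl ` SX | Inr _ \<Rightarrow> Inr ` SY)"

definition game_scope :: "('x \<times> 'y) \<Rightarrow> ('x + 'y) set" where
  "game_scope q = {Inl (fst q), Inr (snd q)}"

definition game_pred ::
  "('x \<Rightarrow> 'y \<Rightarrow> 'a \<Rightarrow> 'b \<Rightarrow> bool) \<Rightarrow> ('x \<times> 'y) \<Rightarrow> (('x + 'y) \<rightharpoonup> ('a + 'b)) \<Rightarrow> bool" where
  "game_pred P q \<phi> = P (fst q) (snd q) (projl (the (\<phi> (Inl (fst q))))) (projr (the (\<phi> (Inr (snd q)))))"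

definition opt_las_game ::
  "nat \<Rightarrow> 'x set \<Rightarrow> 'y set \<Rightarrow> ('x \<times> 'y) pmf \<Rightarrow> 'a set \<Rightarrow> 'b set
   \<Rightarrow> ('x \<Rightarrow> 'y \<Rightarrow> 'a \<Rightarrow> 'b \<Rightarrow> bool) \<Rightarrow> real" where
  "opt_las_game r X Y Q SX SY P =
     opt_las r (game_vars X Y) (game_dom SX SY) Q game_scope (game_pred P)"

definition bday_vars :: "nat \<Rightarrow> 'x set \<Rightarrow> 'y set \<Rightarrow> ('x set \<times> 'y set) set" where
  "bday_vars l X Y = {(S,T). S \<subseteq> X \<and> card S = l \<and> T \<subseteq> Y \<and> card T = l}"

text \<open>The alphabet of (S,T) is identified with the assignments to S \<union> T.\<close>

definition bday_dom ::
  "'a set \<Rightarrow> 'b set \<Rightarrow> ('x set \<times> 'y set) \<Rightarrow> (('x + 'y) \<rightharpoonup> ('a + 'b)) set" where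
  "bday_dom SX SY ST = assignments (Inl ` fst ST \<union> Inr ` snd ST) (game_dom SX SY)"

definition bday_dist :: "nat \<Rightarrow> nat \<Rightarrow> 'x set \<Rightarrow> 'y set \<Rightarrow> ('x set \<times> 'y set) list pmf" where
  "bday_dist k l X Y = pmf_of_set {vs. length vs = k \<and> set vs \<subseteq> bday_vars l X Y}"

definition bday_scope :: "('x set \<times> 'y set) list \<Rightarrow> ('x set \<times> 'y set) set" where
  "bday_scope vs = set vs"

definition combine ::
  "('x set \<times> 'y set) list \<Rightarrow> (('x set \<times> 'y set) \<rightharpoonup> (('x + 'y) \<rightharpoonup> ('a + 'b)))
   \<Rightarrow> (('x + 'y) \<rightharpoonup> ('a + 'b))" where
  "combine vs \<Phi> z =
     (if \<exists>u\<in>set vs. the (\<Phi> u) z \<noteq> None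
      then the (\<Phi> (SOME u. u \<in> set vs \<and> the (\<Phi> u) z \<noteq> None)) z else None)"

definition bday_pred ::
  "('x \<times> 'y) pmf \<Rightarrow> ('x \<Rightarrow> 'y \<Rightarrow> 'a \<Rightarrow> 'b \<Rightarrow> bool) \<Rightarrow> ('x set \<times> 'y set) list
   \<Rightarrow> (('x set \<times> 'y set) \<rightharpoonup> (('x + 'y) \<rightharpoonup> ('a + 'b))) \<Rightarrow> bool" where
  "bday_pred Q P vs \<Phi> \<longleftrightarrow>
     (\<forall>u\<in>set vs. \<forall>w\<in>set vs. consistent (the (\<Phi> u)) (the (\<Phi> w))) \<and>
     (\<forall>(x,y)\<in>set_pmf Q. x \<in> (\<Union>u\<in>set vs. fst u) \<and> y \<in> (\<Union>u\<in>set vs. snd u) \<longrightarrow>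
         game_pred P (x,y) (combine vs \<Phi>))"

definition opt_las_bday ::
  "nat \<Rightarrow> nat \<Rightarrow> nat \<Rightarrow> 'x set \<Rightarrow> 'y set \<Rightarrow> ('x \<times> 'y) pmf \<Rightarrow> 'a set \<Rightarrow> 'b set
   \<Rightarrow> ('x \<Rightarrow> 'y \<Rightarrow> 'a \<Rightarrow> 'b \<Rightarrow> bool) \<Rightarrow> real" where
  "opt_las_bday t k l X Y Q SX SY P =
     opt_las t (bday_vars l X Y) (bday_dom SX SY) (bday_dist k l X Y) bday_scope (bday_pred Q P)"

end

theory Submission
  imports Defs
begin

text \<open>A level-\<open>t\<close> solution for \<open>G\<^sup>l\<^sub>k\<close> is obtained from a level-\<open>r\<close> solution \<open>U\<close> of the game
  by gluing: an assignment \<open>\<Phi>\<close> to a set \<open>A\<close> of blocks \<open>(S, T)\<close> receives the vector of \<open>U\<close>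
  indexed by the game variables covered by \<open>A\<close> and the combined assignment, or the zero vector
  if the blocks of \<open>A\<close> disagree. A Lasserre constraint of level \<open>t\<close> involves at most \<open>2t\<close>
  blocks, hence at most \<open>4lt \<le> r\<close> game variables, so every constraint is inherited from \<open>U\<close>.

  A \<open>k\<close>-tuple of blocks can only be violated through a game question \<open>q\<close> it covers and whose
  predicate the glued assignment violates. Gluing is injective, so the mass lost in this way is
  at most the mass \<open>U\<close> puts on assignments violating \<open>q\<close>. Hence the lifted value is at least
  \<open>1 - (1 - value U) / min\<^sub>q Q q\<close>, which tends to 1 as the value of \<open>U\<close> tends to 1; this gives
  the claim with \<open>c = 1/4\<close>.\<close>

lemma ip_commute: "ip d u w = ip d w u"
  unfolding ip_def by (simp add: mult.commute)

lemma ip_zero_left [simp]: "ip d (\<lambda>_. 0) w = 0"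
  unfolding ip_def by simp

lemma ip_zero_right [simp]: "ip d w (\<lambda>_. 0) = 0"
  unfolding ip_def by simp

lemma ip_sum_right: "ip d u (\<lambda>i. \<Sum>a\<in>A. f a i) = (\<Sum>a\<in>A. ip d u (f a))"
  unfolding ip_def by (simp add: sum_distrib_left sum.swap[of _ A])

lemma ip_sum_left: "ip d (\<lambda>i. \<Sum>a\<in>A. f a i) u = (\<Sum>a\<in>A. ip d (f a) u)"
  by (subst ip_commute) (simp add: ip_sum_right ip_commute)

lemma ip_self_nonneg: "0 \<le> ip d u u"
  unfolding ip_def by (simp add: sum_nonneg)

lemma ip_cong_right: "(\<And>i. i < d \<Longrightarrow> w i = w' i) \<Longrightarrow> ip d u w = ip d u w'"
  unfolding ip_def by simp

lemma ip_eq_1_imp_eq: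
  assumes "ip d u u = 1" "ip d w w = 1" "ip d u w = 1" and "i < d"
  shows "u i = w i"
proof -
  have "ip d (\<lambda>j. u j - w j) (\<lambda>j. u j - w j) = ip d u u - 2 * ip d u w + ip d w w"
    unfolding ip_def by (simp add: algebra_simps sum.distrib sum_subtractf sum_distrib_left)
  also have "\<dots> = 0"
    using assms(1-3) by simp
  finally show ?thesis
    using assms(4) unfolding ip_def by (simp add: sum_nonneg_eq_0_iff)
qed

lemma mem_las_index_iff:
  "(S, \<phi>) \<in> las_index r V alph \<longleftrightarrow> S \<subseteq> V \<and> finite S \<and> card S \<le> r \<and> \<phi> \<in> assignments S alph"
  unfolding las_index_def by auto

lemma assignments_empty [simp]: "assignments {} alph = {Map.empty}"
  unfolding assignments_def by auto

lemma sum_assignments_singleton: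
  "(\<Sum>\<phi>\<in>assignments {x} alph. f \<phi>) = (\<Sum>\<sigma>\<in>alph x. f [x \<mapsto> \<sigma>])"
proof -
  have "assignments {x} alph = (\<lambda>\<sigma>. [x \<mapsto> \<sigma>]) ` alph x"
    unfolding assignments_def by (auto simp: dom_eq_singleton_conv)
  moreover have "inj_on (\<lambda>\<sigma>. [x \<mapsto> \<sigma>]) (alph x)"
    by (auto simp: inj_on_def fun_eq_iff split: if_splits)
  ultimately show ?thesis
    by (simp add: sum.reindex)
qed

lemma map_add_in_assignments:
  assumes "\<phi> \<in> assignments S alph" "\<psi> \<in> assignments T alph"
  shows "\<phi> ++ \<psi> \<in> assignments (S \<union> T) alph"
  unfolding assignments_def
proof (intro CollectI conjI ballI)
  show "dom (\<phi> ++ \<psi>) = S \<union> T"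
    using assms by (auto simp: assignments_def)
  fix v assume "v \<in> S \<union> T"
  then show "the ((\<phi> ++ \<psi>) v) \<in> alph v"
    using assms by (cases "v \<in> T") (auto simp: assignments_def map_add_dom_app_simps)
qed

lemma restrict_map_add_left: "dom \<phi> \<inter> dom \<psi> = {} \<Longrightarrow> (\<phi> ++ \<psi>) |` dom \<phi> = \<phi>"
  by (auto simp: fun_eq_iff restrict_map_def map_add_def split: option.splits)

lemma restrict_map_add_right: "(\<phi> ++ \<psi>) |` dom \<psi> = \<psi>"
  by (auto simp: fun_eq_iff restrict_map_def map_add_def split: option.splits)

lemma assignments_Un_disjoint:
  assumes "S \<inter> T = {}"
  shows "assignments (S \<union> T) alph = (\<lambda>(\<phi>, \<psi>). \<phi> ++ \<psi>) ` (assignments S alph \<times> assignments T alph)"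
proof (intro equalityI subsetI)
  fix \<theta> assume \<theta>: "\<theta> \<in> assignments (S \<union> T) alph"
  then have "\<theta> = (\<theta> |` S) ++ (\<theta> |` T)"
    by (auto simp: assignments_def fun_eq_iff map_add_def restrict_map_def split: option.splits)
  moreover have "\<theta> |` S \<in> assignments S alph" "\<theta> |` T \<in> assignments T alph"
    using \<theta> by (auto simp: assignments_def)
  ultimately show "\<theta> \<in> (\<lambda>(\<phi>, \<psi>). \<phi> ++ \<psi>) ` (assignments S alph \<times> assignments T alph)"
    by (auto intro!: image_eqI[where x = "(\<theta> |` S, \<theta> |` T)"])
qed (auto intro: map_add_in_assignments)

lemma sum_assignments_Un_disjoint:
  assumes "S \<inter> T = {}"
  shows "(\<Sum>\<theta>\<in>assignments (S \<union> T) alph. f \<theta>)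
       = (\<Sum>\<phi>\<in>assignments S alph. \<Sum>\<psi>\<in>assignments T alph. f (\<phi> ++ \<psi>))"
proof -
  have "inj_on (\<lambda>(\<phi>, \<psi>). \<phi> ++ \<psi>) (assignments S alph \<times> assignments T alph)"
  proof (rule inj_onI, clarify)
    fix \<phi> \<psi> \<phi>' \<psi>'
    assume "\<phi> \<in> assignments S alph" "\<psi> \<in> assignments T alph"
      "\<phi>' \<in> assignments S alph" "\<psi>' \<in> assignments T alph" and eq: "\<phi> ++ \<psi> = \<phi>' ++ \<psi>'"
    then have "dom \<phi> = S" "dom \<phi>' = S" "dom \<psi> = T" "dom \<psi>' = T"
      by (auto simp: assignments_def)
    with assms eq restrict_map_add_left[of \<phi> \<psi>] restrict_map_add_left[of \<phi>' \<psi>']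
      restrict_map_add_right[of \<phi> \<psi>] restrict_map_add_right[of \<phi>' \<psi>']
    show "\<phi> = \<phi>' \<and> \<psi> = \<psi>'"
      by metis
  qed
  then show ?thesis
    unfolding assignments_Un_disjoint[OF assms]
    by (simp add: sum.reindex sum.cartesian_product split_def)
qed

lemma finite_assignments:
  assumes "finite S" "\<And>v. v \<in> S \<Longrightarrow> finite (alph v)"
  shows "finite (assignments S alph)"
proof (rule finite_subset)
  show "assignments S alph \<subseteq> {m. dom m = S \<and> ran m \<subseteq> (\<Union>v\<in>S. alph v)}"
    by (auto simp: assignments_def ran_def) (metis domI option.sel)
  show "finite {m. dom m = S \<and> ran m \<subseteq> (\<Union>v\<in>S. alph v)}"
    using assms by (intro finite_set_of_finite_maps) auto
qed

lemma consistent_same_dom_imp_eq: "dom \<phi> = dom \<psi> \<Longrightarrow> consistent \<phi> \<psi> \<Longrightarrow> \<phi> = \<psi>"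
  unfolding consistent_def by (metis domIff ext IntI)

lemma consistent_if_disjoint: "dom \<phi> \<inter> dom \<psi> = {} \<Longrightarrow> consistent \<phi> \<psi>"
  unfolding consistent_def by auto

lemma consistent_if_map_le: "\<phi> \<subseteq>\<^sub>m \<alpha> \<Longrightarrow> \<psi> \<subseteq>\<^sub>m \<alpha> \<Longrightarrow> consistent \<phi> \<psi>"
  unfolding map_le_def consistent_def by auto

lemma map_add_le_iff:
  assumes "consistent \<phi> \<psi>"
  shows "\<phi> ++ \<psi> \<subseteq>\<^sub>m \<alpha> \<longleftrightarrow> \<phi> \<subseteq>\<^sub>m \<alpha> \<and> \<psi> \<subseteq>\<^sub>m \<alpha>"
proof -
  have "\<phi> \<subseteq>\<^sub>m \<phi> ++ \<psi>"
    using assms unfolding consistent_def map_le_def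
    by (simp add: map_add_def split: option.splits) (metis IntI domI)
  then show ?thesis
    by (meson map_add_le_mapI map_le_map_add map_le_trans)
qed

section \<open>Lasserre solutions as consistent local distributions\<close>

lemma ball_prodD: "\<forall>(a, b)\<in>A. P a b \<Longrightarrow> (x, y) \<in> A \<Longrightarrow> P x y"
  by auto

locale lasserre =
  fixes r :: nat and V :: "'v set" and alph :: "'v \<Rightarrow> 'a set" and d :: nat
    and U :: "'v set \<Rightarrow> ('v \<rightharpoonup> 'a) \<Rightarrow> nat \<Rightarrow> real"
  assumes solution: "lasserre_solution r V alph d U"
begin

abbreviation idx where "idx \<equiv> las_index r V alph"

text \<open>The squared norm of the vector of \<open>(S, \<phi>)\<close> is the probability of \<open>\<phi>\<close> under the
  local distribution on \<open>S\<close> encoded by the solution.\<close>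

abbreviation mass where "mass S \<phi> \<equiv> ip d (U S \<phi>) (U S \<phi>)"

abbreviation u0 where "u0 \<equiv> U {} Map.empty"

lemma ip_nonneg:
  assumes "(S1, \<phi>1) \<in> idx" "(S2, \<phi>2) \<in> idx"
  shows "0 \<le> ip d (U S1 \<phi>1) (U S2 \<phi>2)"
proof -
  have "\<forall>(S1, \<phi>1)\<in>idx. \<forall>(S2, \<phi>2)\<in>idx. 0 \<le> ip d (U S1 \<phi>1) (U S2 \<phi>2)"
    using solution unfolding lasserre_solution_def by (elim conjE)
  from ball_prodD[OF ball_prodD[OF this assms(1)] assms(2)] show ?thesis .
qed

lemma ip_eq_if_same_join:
  assumes "(S1, \<phi>1) \<in> idx" "(S2, \<phi>2) \<in> idx" "(S3, \<phi>3) \<in> idx" "(S4, \<phi>4) \<in> idx"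
    and "S1 \<union> S2 = S3 \<union> S4" "consistent \<phi>1 \<phi>2" "consistent \<phi>3 \<phi>4" "\<phi>1 ++ \<phi>2 = \<phi>3 ++ \<phi>4"
  shows "ip d (U S1 \<phi>1) (U S2 \<phi>2) = ip d (U S3 \<phi>3) (U S4 \<phi>4)"
proof -
  have "\<forall>(S1, \<phi>1)\<in>idx. \<forall>(S2, \<phi>2)\<in>idx. \<forall>(S3, \<phi>3)\<in>idx. \<forall>(S4, \<phi>4)\<in>idx.
         S1 \<union> S2 = S3 \<union> S4 \<and> consistent \<phi>1 \<phi>2 \<and> consistent \<phi>3 \<phi>4 \<and> \<phi>1 ++ \<phi>2 = \<phi>3 ++ \<phi>4 \<longrightarrow>
         ip d (U S1 \<phi>1) (U S2 \<phi>2) = ip d (U S3 \<phi>3) (U S4 \<phi>4)"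
    using solution unfolding lasserre_solution_def by (elim conjE)
  from ball_prodD[OF ball_prodD[OF ball_prodD[OF ball_prodD[OF this assms(1)] assms(2)] assms(3)] assms(4)]
  show ?thesis
    using assms(5-) by blast
qed

lemma ip_inconsistent:
  assumes "(S1, \<phi>1) \<in> idx" "(S2, \<phi>2) \<in> idx" "\<not> consistent \<phi>1 \<phi>2"
  shows "ip d (U S1 \<phi>1) (U S2 \<phi>2) = 0"
proof -
  have "\<forall>(S1, \<phi>1)\<in>idx. \<forall>(S2, \<phi>2)\<in>idx. \<not> consistent \<phi>1 \<phi>2 \<longrightarrow> ip d (U S1 \<phi>1) (U S2 \<phi>2) = 0"
    using solution unfolding lasserre_solution_def by (elim conjE)
  from ball_prodD[OF ball_prodD[OF this assms(1)] assms(2)] show ?thesis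
    using assms(3) by blast
qed

lemma sum_mass_singleton: "x \<in> V \<Longrightarrow> (\<Sum>\<sigma>\<in>alph x. mass {x} [x \<mapsto> \<sigma>]) = 1"
  using solution unfolding lasserre_solution_def by (elim conjE) (drule bspec)

lemma mass_empty: "ip d u0 u0 = 1"
  using solution unfolding lasserre_solution_def by (elim conjE)

lemma finite_alph:
  assumes "x \<in> V"
  shows "finite (alph x)"
proof (rule ccontr)
  assume "infinite (alph x)"
  then show False
    using sum_mass_singleton[OF assms] by simp
qed

lemma ip_consistent:
  assumes "(S1, \<phi>1) \<in> idx" "(S2, \<phi>2) \<in> idx" "consistent \<phi>1 \<phi>2" "card (S1 \<union> S2) \<le> r"
  shows "ip d (U S1 \<phi>1) (U S2 \<phi>2) = ip d (U (S1 \<union> S2) (\<phi>1 ++ \<phi>2)) u0"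
proof (rule ip_eq_if_same_join[OF assms(1,2) _ _ _ assms(3)])
  show "(S1 \<union> S2, \<phi>1 ++ \<phi>2) \<in> idx"
    using assms by (auto simp: mem_las_index_iff intro: map_add_in_assignments)
qed (auto simp: mem_las_index_iff consistent_def)

lemma mass_eq_ip_u0: "(S, \<phi>) \<in> idx \<Longrightarrow> mass S \<phi> = ip d (U S \<phi>) u0"
  using ip_consistent[of S \<phi> S \<phi>] by (simp add: consistent_def map_add_subsumed1 mem_las_index_iff)

text \<open>Once the local distribution on \<open>S\<close> has total mass 1, the vectors of its
  assignments sum to \<open>u0\<close>: both unit vectors have inner product 1.\<close>

lemma sum_vectors_eq_u0:
  assumes S: "S \<subseteq> V" "finite S" "card S \<le> r" and total: "(\<Sum>\<phi>\<in>assignments S alph. mass S \<phi>) = 1"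
    and "i < d"
  shows "(\<Sum>\<phi>\<in>assignments S alph. U S \<phi> i) = u0 i"
proof -
  let ?A = "assignments S alph"
  have fin: "finite ?A"
    using S by (intro finite_assignments finite_alph) auto
  have idx: "\<phi> \<in> ?A \<Longrightarrow> (S, \<phi>) \<in> idx" for \<phi>
    using S by (simp add: mem_las_index_iff)
  have orth: "(\<Sum>\<psi>\<in>?A. ip d (U S \<phi>) (U S \<psi>)) = mass S \<phi>" if \<phi>: "\<phi> \<in> ?A" for \<phi>
  proof (rule trans[OF sum.mono_neutral_right[of ?A "{\<phi>}"]])
    show "\<forall>\<psi>\<in>?A - {\<phi>}. ip d (U S \<phi>) (U S \<psi>) = 0"
    proof
      fix \<psi> assume \<psi>: "\<psi> \<in> ?A - {\<phi>}"
      then have "\<not> consistent \<phi> \<psi>"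
        using \<phi> consistent_same_dom_imp_eq[of \<phi> \<psi>] by (auto simp: assignments_def)
      then show "ip d (U S \<phi>) (U S \<psi>) = 0"
        using ip_inconsistent idx \<phi> \<psi> by auto
    qed
  qed (use fin \<phi> in auto)
  define F where "F = (\<lambda>i. \<Sum>\<phi>\<in>?A. U S \<phi> i)"
  have "ip d F F = 1"
    unfolding F_def ip_sum_left ip_sum_right using total by (simp add: orth)
  moreover have "ip d F u0 = 1"
    unfolding F_def ip_sum_left using total by (simp add: mass_eq_ip_u0 idx)
  ultimately show ?thesis
    using ip_eq_1_imp_eq[OF _ mass_empty _ \<open>i < d\<close>] unfolding F_def by blast
qed

lemma sum_mass_extensions:
  assumes "S \<union> T \<subseteq> V" "finite S" "finite T" "S \<inter> T = {}" "card (S \<union> T) \<le> r"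
    and total: "(\<Sum>\<psi>\<in>assignments T alph. mass T \<psi>) = 1"
    and \<phi>: "\<phi> \<in> assignments S alph"
  shows "(\<Sum>\<psi>\<in>assignments T alph. mass (S \<union> T) (\<phi> ++ \<psi>)) = mass S \<phi>"
proof -
  have card: "card S \<le> r" "card T \<le> r"
    using assms card_mono[of "S \<union> T" S] card_mono[of "S \<union> T" T] by auto
  have idx: "(S, \<phi>) \<in> idx"
    using assms card by (simp add: mem_las_index_iff)
  have "(\<Sum>\<psi>\<in>assignments T alph. mass (S \<union> T) (\<phi> ++ \<psi>))
      = (\<Sum>\<psi>\<in>assignments T alph. ip d (U S \<phi>) (U T \<psi>))"
  proof (rule sum.cong[OF refl])
    fix \<psi> assume \<psi>: "\<psi> \<in> assignments T alph"
    have "(S \<union> T, \<phi> ++ \<psi>) \<in> idx"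
      using assms \<psi> by (simp add: mem_las_index_iff map_add_in_assignments)
    moreover have "consistent \<phi> \<psi>"
      using \<phi> \<psi> assms(4) by (intro consistent_if_disjoint) (auto simp: assignments_def)
    ultimately show "mass (S \<union> T) (\<phi> ++ \<psi>) = ip d (U S \<phi>) (U T \<psi>)"
      using ip_consistent[OF idx, of T \<psi>] mass_eq_ip_u0 \<psi> assms card
      by (simp add: mem_las_index_iff)
  qed
  also have "\<dots> = ip d (U S \<phi>) (\<lambda>i. \<Sum>\<psi>\<in>assignments T alph. U T \<psi> i)"
    by (simp add: ip_sum_right)
  also have "\<dots> = ip d (U S \<phi>) u0"
    using assms card by (intro ip_cong_right sum_vectors_eq_u0 total) auto
  also have "\<dots> = mass S \<phi>"
    using mass_eq_ip_u0[OF idx] by simp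
  finally show ?thesis .
qed

lemma sum_mass_eq_1:
  assumes "S \<subseteq> V" "finite S" "card S \<le> r"
  shows "(\<Sum>\<phi>\<in>assignments S alph. mass S \<phi>) = 1"
  using assms(2,1,3)
proof (induction S rule: finite_induct)
  case empty
  then show ?case using mass_empty by simp
next
  case (insert x S)
  have "(\<Sum>\<theta>\<in>assignments (S \<union> {x}) alph. mass (S \<union> {x}) \<theta>)
      = (\<Sum>\<phi>\<in>assignments S alph. \<Sum>\<psi>\<in>assignments {x} alph. mass (S \<union> {x}) (\<phi> ++ \<psi>))"
    using insert by (intro sum_assignments_Un_disjoint) auto
  also have "\<dots> = (\<Sum>\<phi>\<in>assignments S alph. mass S \<phi>)"
    using insert sum_mass_singleton
    by (intro sum.cong refl sum_mass_extensions) (auto simp: sum_assignments_singleton)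
  also have "\<dots> = 1"
    using insert by simp
  finally show ?case
    by simp
qed

lemma sum_mass_restrict:
  assumes "S \<subseteq> V" "finite S" "card S \<le> r" "T \<subseteq> S"
  shows "(\<Sum>\<theta>\<in>assignments S alph. g (\<theta> |` T) * mass S \<theta>) = (\<Sum>\<phi>\<in>assignments T alph. g \<phi> * mass T \<phi>)"
proof -
  let ?R = "S - T"
  have S: "T \<union> ?R = S" "T \<inter> ?R = {}" "finite T" "finite ?R" "card ?R \<le> r"
    using assms finite_subset card_mono[of S ?R] by auto
  have "(\<Sum>\<theta>\<in>assignments S alph. g (\<theta> |` T) * mass S \<theta>)
      = (\<Sum>\<phi>\<in>assignments T alph. \<Sum>\<psi>\<in>assignments ?R alph. g ((\<phi> ++ \<psi>) |` T) * mass S (\<phi> ++ \<psi>))"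
    using sum_assignments_Un_disjoint[OF S(2), of "\<lambda>\<theta>. g (\<theta> |` T) * mass S \<theta>" alph]
    unfolding S(1) .
  also have "\<dots> = (\<Sum>\<phi>\<in>assignments T alph. g \<phi> * (\<Sum>\<psi>\<in>assignments ?R alph. mass (T \<union> ?R) (\<phi> ++ \<psi>)))"
    unfolding sum_distrib_left
  proof (intro sum.cong refl)
    fix \<phi> \<psi> assume "\<phi> \<in> assignments T alph" "\<psi> \<in> assignments ?R alph"
    then have "(\<phi> ++ \<psi>) |` T = \<phi>"
      using restrict_map_add_left[of \<phi> \<psi>] by (auto simp: assignments_def)
    then show "g ((\<phi> ++ \<psi>) |` T) * mass S (\<phi> ++ \<psi>) = g \<phi> * mass (T \<union> ?R) (\<phi> ++ \<psi>)"
      using S by simp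
  qed
  also have "\<dots> = (\<Sum>\<phi>\<in>assignments T alph. g \<phi> * mass T \<phi>)"
    using assms S sum_mass_eq_1[of ?R] by (intro sum.cong refl arg_cong2[where f = "(*)"] sum_mass_extensions) auto
  finally show ?thesis .
qed

lemma value_le_1:
  assumes "finite (set_pmf W)"
    and "\<And>c. c \<in> set_pmf W \<Longrightarrow> scope c \<subseteq> V \<and> finite (scope c) \<and> card (scope c) \<le> r"
  shows "las_value alph W scope pred d U \<le> 1"
  unfolding las_value_def
proof (intro measure_pmf.integral_le_const integrable_measure_pmf_finite assms(1))
  have "(\<Sum>\<phi>\<in>assignments (scope c) alph. mass (scope c) \<phi> * (if pred c \<phi> then 1 else 0)) \<le> 1"
    if "c \<in> set_pmf W" for c
  proof -
    have "(\<Sum>\<phi>\<in>assignments (scope c) alph. mass (scope c) \<phi> * (if pred c \<phi> then 1 else 0))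
        \<le> (\<Sum>\<phi>\<in>assignments (scope c) alph. mass (scope c) \<phi>)"
      by (rule sum_mono) (simp add: ip_self_nonneg)
    also have "\<dots> = 1"
      using assms(2)[OF that] by (intro sum_mass_eq_1) auto
    finally show ?thesis .
  qed
  then show "AE c in measure_pmf W.
      (\<Sum>\<phi>\<in>assignments (scope c) alph. mass (scope c) \<phi> * (if pred c \<phi> then 1 else 0)) \<le> 1"
    by (simp add: AE_measure_pmf_iff)
qed

end

lemma lasserre_solution_exists:
  fixes V :: "'v set" and alph :: "'v \<Rightarrow> 'a set"
  assumes "\<And>v. v \<in> V \<Longrightarrow> finite (alph v) \<and> alph v \<noteq> {}"
  shows "\<exists>d U. lasserre_solution r V alph d U"
proof -
  define \<alpha> where "\<alpha> = (\<lambda>v. Some (SOME \<sigma>. \<sigma> \<in> alph v))"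
  define U :: "'v set \<Rightarrow> ('v \<rightharpoonup> 'a) \<Rightarrow> nat \<Rightarrow> real" where "U = (\<lambda>S \<phi> i. if \<phi> \<subseteq>\<^sub>m \<alpha> then 1 else 0)"
  have ip_U: "ip 1 (U S1 \<phi>1) (U S2 \<phi>2) = (if \<phi>1 \<subseteq>\<^sub>m \<alpha> \<and> \<phi>2 \<subseteq>\<^sub>m \<alpha> then 1 else 0)" for S1 S2 \<phi>1 \<phi>2
    by (simp add: ip_def U_def)
  have singleton: "(\<Sum>\<sigma>\<in>alph x. ip 1 (U {x} [x \<mapsto> \<sigma>]) (U {x} [x \<mapsto> \<sigma>])) = 1" if x: "x \<in> V" for x
  proof -
    have "([x \<mapsto> \<sigma>] \<subseteq>\<^sub>m \<alpha>) = (\<sigma> = (SOME \<sigma>. \<sigma> \<in> alph x))" for \<sigma>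
      by (auto simp: map_le_def \<alpha>_def)
    then show ?thesis
      unfolding ip_U using assms[OF x] some_in_eq[of "alph x"] by (simp add: sum.delta')
  qed
  have join: "(if \<phi>1 \<subseteq>\<^sub>m \<alpha> \<and> \<phi>2 \<subseteq>\<^sub>m \<alpha> then 1 else 0) = (if \<phi>3 \<subseteq>\<^sub>m \<alpha> \<and> \<phi>4 \<subseteq>\<^sub>m \<alpha> then 1 else (0::real))"
    if "consistent \<phi>1 \<phi>2" "consistent \<phi>3 \<phi>4" "\<phi>1 ++ \<phi>2 = \<phi>3 ++ \<phi>4" for \<phi>1 \<phi>2 \<phi>3 \<phi>4
    using that map_add_le_iff[of \<phi>1 \<phi>2 \<alpha>] map_add_le_iff[of \<phi>3 \<phi>4 \<alpha>] by simp
  have "lasserre_solution r V alph 1 U"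
    using consistent_if_map_le singleton join
    unfolding lasserre_solution_def ip_U by auto
  then show ?thesis
    by (intro exI)
qed

section \<open>Gluing assignments of blocks\<close>

definition block_vars :: "'x set \<times> 'y set \<Rightarrow> ('x + 'y) set" where
  "block_vars u = Inl ` fst u \<union> Inr ` snd u"

definition blocks_vars :: "('x set \<times> 'y set) set \<Rightarrow> ('x + 'y) set" where
  "blocks_vars A = (\<Union>u\<in>A. block_vars u)"

definition glue ::
  "('x set \<times> 'y set) set \<Rightarrow> (('x set \<times> 'y set) \<rightharpoonup> (('x + 'y) \<rightharpoonup> ('a + 'b)))
   \<Rightarrow> ('x + 'y) \<rightharpoonup> ('a + 'b)" where
  "glue A \<Phi> z =
     (if \<exists>u\<in>A. the (\<Phi> u) z \<noteq> None
      then the (\<Phi> (SOME u. u \<in> A \<and> the (\<Phi> u) z \<noteq> None)) z else None)"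

definition pairwise_consistent ::
  "('x set \<times> 'y set) set \<Rightarrow> (('x set \<times> 'y set) \<rightharpoonup> (('x + 'y) \<rightharpoonup> ('a + 'b))) \<Rightarrow> bool" where
  "pairwise_consistent A \<Phi> \<longleftrightarrow> (\<forall>u\<in>A. \<forall>w\<in>A. consistent (the (\<Phi> u)) (the (\<Phi> w)))"

lemma combine_eq_glue: "combine vs \<Phi> = glue (set vs) \<Phi>"
  by (simp add: fun_eq_iff combine_def glue_def)

lemma bday_dom_eq: "bday_dom SX SY u = assignments (block_vars u) (game_dom SX SY)"
  by (simp add: bday_dom_def block_vars_def)

lemma blocks_vars_Un: "blocks_vars (A \<union> B) = blocks_vars A \<union> blocks_vars B"
  by (simp add: blocks_vars_def)

lemma map_add_apply_consistent: "consistent \<phi> \<psi> \<Longrightarrow> x \<in> dom \<phi> \<Longrightarrow> (\<phi> ++ \<psi>) x = \<phi> x"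
  unfolding consistent_def by (cases "x \<in> dom \<psi>") (auto simp: map_add_dom_app_simps)

lemma block_assignmentD:
  assumes "\<Phi> \<in> assignments A (bday_dom SX SY)" "u \<in> A"
  shows "\<Phi> u = Some (the (\<Phi> u))" "the (\<Phi> u) \<in> assignments (block_vars u) (game_dom SX SY)"
    "dom (the (\<Phi> u)) = block_vars u"
  using assms by (auto simp: assignments_def bday_dom_eq)

lemma glue_apply:
  assumes \<Phi>: "\<Phi> \<in> assignments A (bday_dom SX SY)" and "pairwise_consistent A \<Phi>"
    and u: "u \<in> A" and z: "z \<in> block_vars u"
  shows "glue A \<Phi> z = the (\<Phi> u) z"
proof -
  have defined: "the (\<Phi> u) z \<noteq> None"
    using block_assignmentD(3)[OF \<Phi> u] z by auto
  then have some: "\<exists>u\<in>A. the (\<Phi> u) z \<noteq> None"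
    using u by blast
  define w where "w = (SOME w. w \<in> A \<and> the (\<Phi> w) z \<noteq> None)"
  have w: "w \<in> A \<and> the (\<Phi> w) z \<noteq> None"
    unfolding w_def by (rule someI_ex) (use some in blast)
  then have "consistent (the (\<Phi> w)) (the (\<Phi> u))"
    using assms(2) u by (simp add: pairwise_consistent_def)
  then have "the (\<Phi> w) z = the (\<Phi> u) z"
    using w defined unfolding consistent_def by (metis IntI domIff)
  then show ?thesis
    using some by (simp add: glue_def w_def)
qed

lemma dom_glue:
  assumes \<Phi>: "\<Phi> \<in> assignments A (bday_dom SX SY)"
  shows "dom (glue A \<Phi>) = blocks_vars A"
proof (rule set_eqI)
  fix z
  have "\<forall>u\<in>A. the (\<Phi> u) z \<noteq> None \<longleftrightarrow> z \<in> block_vars u"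
    using block_assignmentD(3)[OF \<Phi>] by (metis domIff)
  then have iff: "(\<exists>u\<in>A. the (\<Phi> u) z \<noteq> None) \<longleftrightarrow> z \<in> blocks_vars A"
    by (auto simp: blocks_vars_def)
  show "z \<in> dom (glue A \<Phi>) \<longleftrightarrow> z \<in> blocks_vars A"
  proof (cases "\<exists>u\<in>A. the (\<Phi> u) z \<noteq> None")
    case True
    then have "the (\<Phi> (SOME u. u \<in> A \<and> the (\<Phi> u) z \<noteq> None)) z \<noteq> None"
      using someI_ex[of "\<lambda>u. u \<in> A \<and> the (\<Phi> u) z \<noteq> None"] by blast
    then show ?thesis
      using True iff by (simp add: glue_def domIff)
  next
    case False
    then show ?thesis
      using iff by (simp add: glue_def domIff)
  qed
qed

lemma glue_in_assignments:
  assumes \<Phi>: "\<Phi> \<in> assignments A (bday_dom SX SY)" and "pairwise_consistent A \<Phi>"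
  shows "glue A \<Phi> \<in> assignments (blocks_vars A) (game_dom SX SY)"
  unfolding assignments_def
proof (intro CollectI conjI ballI)
  show "dom (glue A \<Phi>) = blocks_vars A"
    using \<Phi> by (rule dom_glue)
  fix z assume "z \<in> blocks_vars A"
  then obtain u where u: "u \<in> A" "z \<in> block_vars u"
    by (auto simp: blocks_vars_def)
  have "the (\<Phi> u) \<in> assignments (block_vars u) (game_dom SX SY)"
    using \<Phi> u(1) by (rule block_assignmentD(2))
  then show "the (glue A \<Phi> z) \<in> game_dom SX SY z"
    using glue_apply[OF assms u] u(2) by (simp add: assignments_def)
qed

lemma glue_inj:
  assumes \<Phi>: "\<Phi> \<in> assignments A (bday_dom SX SY)" and \<Psi>: "\<Psi> \<in> assignments A (bday_dom SX SY)"
    and "pairwise_consistent A \<Phi>" "pairwise_consistent A \<Psi>" and eq: "glue A \<Phi> = glue A \<Psi>"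
  shows "\<Phi> = \<Psi>"
proof
  fix u
  show "\<Phi> u = \<Psi> u"
  proof (cases "u \<in> A")
    case True
    have "consistent (the (\<Phi> u)) (the (\<Psi> u))"
      unfolding consistent_def
    proof
      fix z assume "z \<in> dom (the (\<Phi> u)) \<inter> dom (the (\<Psi> u))"
      then have "z \<in> block_vars u"
        using block_assignmentD(3)[OF \<Phi> True] by auto
      then show "the (\<Phi> u) z = the (\<Psi> u) z"
        using glue_apply[OF \<Phi> assms(3) True] glue_apply[OF \<Psi> assms(4) True] eq by simp
    qed
    then have "the (\<Phi> u) = the (\<Psi> u)"
      by (intro consistent_same_dom_imp_eq) (simp add: block_assignmentD(3)[OF \<Phi> True] block_assignmentD(3)[OF \<Psi> True])
    then show ?thesis
      using block_assignmentD(1)[OF \<Phi> True] block_assignmentD(1)[OF \<Psi> True] by argo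
  next
    case False
    then show ?thesis
      using \<Phi> \<Psi> by (auto simp: assignments_def)
  qed
qed

lemma glue_map_add_apply:
  assumes \<Phi>1: "\<Phi>1 \<in> assignments A1 (bday_dom SX SY)" and \<Phi>2: "\<Phi>2 \<in> assignments A2 (bday_dom SX SY)"
    and c: "consistent \<Phi>1 \<Phi>2" and p1: "pairwise_consistent A1 \<Phi>1" and p2: "pairwise_consistent A2 \<Phi>2"
    and cc: "consistent (glue A1 \<Phi>1) (glue A2 \<Phi>2)"
    and v: "v \<in> A1 \<union> A2" and z: "z \<in> block_vars v"
  shows "the ((\<Phi>1 ++ \<Phi>2) v) z = (glue A1 \<Phi>1 ++ glue A2 \<Phi>2) z"
proof -
  have dom: "dom \<Phi>1 = A1" "dom \<Phi>2 = A2"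
    using \<Phi>1 \<Phi>2 by (auto simp: assignments_def)
  have at1: "v \<in> A1 \<Longrightarrow> the ((\<Phi>1 ++ \<Phi>2) v) z = glue A1 \<Phi>1 z"
    using map_add_apply_consistent[OF c] dom glue_apply[OF \<Phi>1 p1 _ z] by simp
  have at2: "v \<in> A2 \<Longrightarrow> the ((\<Phi>1 ++ \<Phi>2) v) z = glue A2 \<Phi>2 z"
    using dom glue_apply[OF \<Phi>2 p2 _ z] by (simp add: map_add_dom_app_simps)
  show ?thesis
  proof (cases "z \<in> dom (glue A2 \<Phi>2)")
    case True
    then have "(glue A1 \<Phi>1 ++ glue A2 \<Phi>2) z = glue A2 \<Phi>2 z"
      by (simp add: map_add_dom_app_simps)
    moreover have "glue A1 \<Phi>1 z = glue A2 \<Phi>2 z" if "v \<in> A1"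
      using cc True dom_glue[OF \<Phi>1] that z unfolding consistent_def by (auto simp: blocks_vars_def)
    ultimately show ?thesis
      using v at1 at2 by auto
  next
    case False
    then have "v \<notin> A2"
      using dom_glue[OF \<Phi>2] z by (auto simp: blocks_vars_def)
    with False show ?thesis
      using v at1 by (simp add: map_add_dom_app_simps)
  qed
qed

lemma pairwise_consistent_map_add_iff:
  assumes \<Phi>1: "\<Phi>1 \<in> assignments A1 (bday_dom SX SY)" and \<Phi>2: "\<Phi>2 \<in> assignments A2 (bday_dom SX SY)"
    and c: "consistent \<Phi>1 \<Phi>2"
  shows "pairwise_consistent (A1 \<union> A2) (\<Phi>1 ++ \<Phi>2) \<longleftrightarrow>
    pairwise_consistent A1 \<Phi>1 \<and> pairwise_consistent A2 \<Phi>2 \<and> consistent (glue A1 \<Phi>1) (glue A2 \<Phi>2)"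
    (is "?pc \<longleftrightarrow> ?p1 \<and> ?p2 \<and> ?cc")
proof -
  let ?\<Phi> = "\<Phi>1 ++ \<Phi>2"
  have \<Phi>: "?\<Phi> \<in> assignments (A1 \<union> A2) (bday_dom SX SY)"
    using \<Phi>1 \<Phi>2 by (rule map_add_in_assignments)
  have dom: "dom \<Phi>1 = A1" "dom \<Phi>2 = A2"
    using \<Phi>1 \<Phi>2 by (auto simp: assignments_def)
  have at1: "u \<in> A1 \<Longrightarrow> ?\<Phi> u = \<Phi>1 u" and at2: "u \<in> A2 \<Longrightarrow> ?\<Phi> u = \<Phi>2 u" for u
    using map_add_apply_consistent[OF c] dom by (auto simp: map_add_dom_app_simps)
  show ?thesis
  proof (intro iffI)
    assume pc: ?pc
    then have p1: ?p1 and p2: ?p2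
      using at1 at2 unfolding pairwise_consistent_def by (metis UnCI)+
    have ?cc
      unfolding consistent_def
    proof
      fix z assume "z \<in> dom (glue A1 \<Phi>1) \<inter> dom (glue A2 \<Phi>2)"
      then obtain u1 u2 where u: "u1 \<in> A1" "z \<in> block_vars u1" "u2 \<in> A2" "z \<in> block_vars u2"
        using dom_glue[OF \<Phi>1] dom_glue[OF \<Phi>2] by (auto simp: blocks_vars_def)
      have "consistent (the (?\<Phi> u1)) (the (?\<Phi> u2))"
        using pc u unfolding pairwise_consistent_def by blast
      moreover have "z \<in> dom (the (?\<Phi> u1))" "z \<in> dom (the (?\<Phi> u2))"
        using block_assignmentD(3)[OF \<Phi>] u by auto
      ultimately show "glue A1 \<Phi>1 z = glue A2 \<Phi>2 z"
        using glue_apply[OF \<Phi>1 p1 u(1,2)] glue_apply[OF \<Phi>2 p2 u(3,4)] at1[OF u(1)] at2[OF u(3)]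
        unfolding consistent_def by auto
    qed
    with p1 p2 show "?p1 \<and> ?p2 \<and> ?cc"
      by blast
  next
    assume a: "?p1 \<and> ?p2 \<and> ?cc"
    show ?pc
      unfolding pairwise_consistent_def consistent_def
    proof (intro ballI)
      fix u w z assume u: "u \<in> A1 \<union> A2" and w: "w \<in> A1 \<union> A2"
        and z: "z \<in> dom (the (?\<Phi> u)) \<inter> dom (the (?\<Phi> w))"
      then have "z \<in> block_vars u" "z \<in> block_vars w"
        using block_assignmentD(3)[OF \<Phi>] by auto
      then show "the (?\<Phi> u) z = the (?\<Phi> w) z"
        using glue_map_add_apply[OF \<Phi>1 \<Phi>2 c _ _ _ u] glue_map_add_apply[OF \<Phi>1 \<Phi>2 c _ _ _ w] a by simp
    qed
  qed
qed

lemma glue_map_add: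
  assumes \<Phi>1: "\<Phi>1 \<in> assignments A1 (bday_dom SX SY)" and \<Phi>2: "\<Phi>2 \<in> assignments A2 (bday_dom SX SY)"
    and c: "consistent \<Phi>1 \<Phi>2" and pc: "pairwise_consistent (A1 \<union> A2) (\<Phi>1 ++ \<Phi>2)"
  shows "glue (A1 \<union> A2) (\<Phi>1 ++ \<Phi>2) = glue A1 \<Phi>1 ++ glue A2 \<Phi>2"
proof
  fix z
  have parts: "pairwise_consistent A1 \<Phi>1" "pairwise_consistent A2 \<Phi>2" "consistent (glue A1 \<Phi>1) (glue A2 \<Phi>2)"
    using pairwise_consistent_map_add_iff[OF \<Phi>1 \<Phi>2 c] pc by auto
  have \<Phi>: "\<Phi>1 ++ \<Phi>2 \<in> assignments (A1 \<union> A2) (bday_dom SX SY)"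
    using \<Phi>1 \<Phi>2 by (rule map_add_in_assignments)
  show "glue (A1 \<union> A2) (\<Phi>1 ++ \<Phi>2) z = (glue A1 \<Phi>1 ++ glue A2 \<Phi>2) z"
  proof (cases "z \<in> blocks_vars (A1 \<union> A2)")
    case True
    then obtain v where v: "v \<in> A1 \<union> A2" "z \<in> block_vars v"
      by (auto simp: blocks_vars_def)
    show ?thesis
      using glue_apply[OF \<Phi> pc v] glue_map_add_apply[OF \<Phi>1 \<Phi>2 c parts v] by simp
  next
    case False
    then have "z \<notin> dom (glue (A1 \<union> A2) (\<Phi>1 ++ \<Phi>2))" "z \<notin> dom (glue A1 \<Phi>1)" "z \<notin> dom (glue A2 \<Phi>2)"
      using dom_glue[OF \<Phi>] dom_glue[OF \<Phi>1] dom_glue[OF \<Phi>2] by (auto simp: blocks_vars_Un)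
    then show ?thesis
      by (simp add: domIff map_add_def)
  qed
qed

lemma glue_inconsistent:
  assumes \<Phi>1: "\<Phi>1 \<in> assignments A1 (bday_dom SX SY)" and \<Phi>2: "\<Phi>2 \<in> assignments A2 (bday_dom SX SY)"
    and p: "pairwise_consistent A1 \<Phi>1" "pairwise_consistent A2 \<Phi>2" and "\<not> consistent \<Phi>1 \<Phi>2"
  shows "\<not> consistent (glue A1 \<Phi>1) (glue A2 \<Phi>2)"
proof -
  obtain u where "u \<in> dom \<Phi>1 \<inter> dom \<Phi>2" "\<Phi>1 u \<noteq> \<Phi>2 u"
    using assms(5) unfolding consistent_def by blast
  then have u: "u \<in> A1" "u \<in> A2" "the (\<Phi>1 u) \<noteq> the (\<Phi>2 u)"
    using \<Phi>1 \<Phi>2 by (auto simp: assignments_def)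
  then have "\<not> consistent (the (\<Phi>1 u)) (the (\<Phi>2 u))"
    using consistent_same_dom_imp_eq block_assignmentD(3)[OF \<Phi>1 u(1)] block_assignmentD(3)[OF \<Phi>2 u(2)]
    by metis
  then obtain z where z: "z \<in> block_vars u" "the (\<Phi>1 u) z \<noteq> the (\<Phi>2 u) z"
    using block_assignmentD(3)[OF \<Phi>1 u(1)] unfolding consistent_def by auto
  then have "glue A1 \<Phi>1 z \<noteq> glue A2 \<Phi>2 z"
    using glue_apply[OF \<Phi>1 p(1) u(1) z(1)] glue_apply[OF \<Phi>2 p(2) u(2) z(1)] by simp
  moreover have "z \<in> dom (glue A1 \<Phi>1)" "z \<in> dom (glue A2 \<Phi>2)"
    using dom_glue[OF \<Phi>1] dom_glue[OF \<Phi>2] u z(1) by (auto simp: blocks_vars_def)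
  ultimately show ?thesis
    unfolding consistent_def by blast
qed

lemma glue_empty [simp]: "glue {} \<Phi> = Map.empty"
  by (simp add: glue_def fun_eq_iff)

lemma pairwise_consistent_singleton [simp]: "pairwise_consistent {u} [u \<mapsto> \<sigma>]"
  by (simp add: pairwise_consistent_def consistent_def)

lemma glue_singleton:
  assumes "\<sigma> \<in> bday_dom SX SY u"
  shows "glue {u} [u \<mapsto> \<sigma>] = \<sigma>"
proof
  fix z
  have \<Phi>: "[u \<mapsto> \<sigma>] \<in> assignments {u} (bday_dom SX SY)"
    using assms by (simp add: assignments_def)
  have p: "pairwise_consistent {u} [u \<mapsto> \<sigma>]"
    by simp
  have dom: "dom \<sigma> = block_vars u"
    using assms by (simp add: bday_dom_eq assignments_def)
  show "glue {u} [u \<mapsto> \<sigma>] z = \<sigma> z"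
  proof (cases "z \<in> block_vars u")
    case True
    then show ?thesis
      using glue_apply[OF \<Phi> p] by simp
  next
    case False
    then have "z \<notin> dom (glue {u} [u \<mapsto> \<sigma>])" "z \<notin> dom \<sigma>"
      using dom_glue[OF \<Phi>] dom by (auto simp: blocks_vars_def)
    then show ?thesis
      by (simp add: domIff)
  qed
qed

lemma bday_var_block_vars:
  fixes u :: "'x set \<times> 'y set"
  assumes "u \<in> bday_vars l X Y" "finite X" "finite Y"
  shows "block_vars u \<subseteq> game_vars X Y" "finite (block_vars u)" "card (block_vars u) \<le> 2 * l"
proof -
  obtain S T where u: "u = (S, T)" "S \<subseteq> X" "card S = l" "T \<subseteq> Y" "card T = l"
    using assms(1) by (auto simp: bday_vars_def)
  then have fin: "finite S" "finite T"
    using assms finite_subset by auto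
  show "block_vars u \<subseteq> game_vars X Y" "finite (block_vars u)"
    using u fin by (auto simp: block_vars_def game_vars_def)
  have "card (block_vars u) \<le> card (Inl ` S :: ('x + 'y) set) + card (Inr ` T :: ('x + 'y) set)"
    using u by (simp add: block_vars_def card_Un_le)
  also have "\<dots> \<le> card S + card T"
    by (intro add_mono card_image_le fin)
  finally show "card (block_vars u) \<le> 2 * l"
    using u by simp
qed

lemma bday_vars_blocks_vars:
  assumes "A \<subseteq> bday_vars l X Y" "finite A" "finite X" "finite Y"
  shows "blocks_vars A \<subseteq> game_vars X Y" "finite (blocks_vars A)" "card (blocks_vars A) \<le> 2 * l * card A"
proof -
  show "blocks_vars A \<subseteq> game_vars X Y"
    unfolding blocks_vars_def using bday_var_block_vars(1) assms by (intro UN_least) blast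
  show "finite (blocks_vars A)"
    unfolding blocks_vars_def using bday_var_block_vars(2) assms by (intro finite_UN_I) blast+
  have "card (blocks_vars A) \<le> (\<Sum>u\<in>A. card (block_vars u))"
    unfolding blocks_vars_def by (rule card_UN_le[OF assms(2)])
  also have "\<dots> \<le> (\<Sum>u\<in>A. 2 * l)"
    using bday_var_block_vars(3) assms by (intro sum_mono) blast
  finally show "card (blocks_vars A) \<le> 2 * l * card A"
    by (simp add: mult.commute)
qed

section \<open>The lifted solution\<close>

definition lift ::
  "(('x + 'y) set \<Rightarrow> (('x + 'y) \<rightharpoonup> ('a + 'b)) \<Rightarrow> nat \<Rightarrow> real)
   \<Rightarrow> ('x set \<times> 'y set) set \<Rightarrow> (('x set \<times> 'y set) \<rightharpoonup> (('x + 'y) \<rightharpoonup> ('a + 'b))) \<Rightarrow> nat \<Rightarrow> real" where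
  "lift U A \<Phi> = (if pairwise_consistent A \<Phi> then U (blocks_vars A) (glue A \<Phi>) else (\<lambda>_. 0))"

locale lasserre_lift = lasserre r "game_vars X Y" "game_dom SX SY" d U
  for r :: nat and X :: "'x set" and Y :: "'y set" and SX :: "'a set" and SY :: "'b set" and d U +
  fixes l t :: nat
  assumes finite_X: "finite X" and finite_Y: "finite Y" and t_pos: "1 \<le> t" and level: "4 * l * t \<le> r"
begin

abbreviation lift_idx where "lift_idx \<equiv> las_index t (bday_vars l X Y) (bday_dom SX SY)"

text \<open>Two sets of at most \<open>t\<close> blocks each cover at most \<open>4 l t \<le> r\<close> game variables.\<close>

lemma blocks_vars_bounded:
  assumes "A \<subseteq> bday_vars l X Y" "finite A" "card A \<le> 2 * t"
  shows "blocks_vars A \<subseteq> game_vars X Y" "finite (blocks_vars A)" "card (blocks_vars A) \<le> r"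
proof -
  note blocks = bday_vars_blocks_vars[OF assms(1,2) finite_X finite_Y]
  show "blocks_vars A \<subseteq> game_vars X Y" "finite (blocks_vars A)"
    using blocks(1,2) .
  have "card (blocks_vars A) \<le> 2 * l * card A"
    using blocks(3) .
  also have "\<dots> \<le> 2 * l * (2 * t)"
    using assms(3) by simp
  finally show "card (blocks_vars A) \<le> r"
    using level by simp
qed

lemma glue_in_idx:
  assumes "(A, \<Phi>) \<in> lift_idx" "pairwise_consistent A \<Phi>"
  shows "(blocks_vars A, glue A \<Phi>) \<in> idx"
  using assms blocks_vars_bounded[of A] glue_in_assignments[of \<Phi> A SX SY]
  by (simp add: mem_las_index_iff)

text \<open>The right-hand side depends on \<open>(A1, \<Phi>1)\<close> and \<open>(A2, \<Phi>2)\<close> only through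
  \<open>A1 \<union> A2\<close> and \<open>\<Phi>1 ++ \<Phi>2\<close>.\<close>

lemma ip_lift_consistent:
  assumes i1: "(A1, \<Phi>1) \<in> lift_idx" and i2: "(A2, \<Phi>2) \<in> lift_idx" and c: "consistent \<Phi>1 \<Phi>2"
  shows "ip d (lift U A1 \<Phi>1) (lift U A2 \<Phi>2) =
    (if pairwise_consistent (A1 \<union> A2) (\<Phi>1 ++ \<Phi>2)
     then ip d (U (blocks_vars (A1 \<union> A2)) (glue (A1 \<union> A2) (\<Phi>1 ++ \<Phi>2))) u0 else 0)"
proof -
  have A: "A1 \<subseteq> bday_vars l X Y" "finite A1" "card A1 \<le> t" "\<Phi>1 \<in> assignments A1 (bday_dom SX SY)"
    "A2 \<subseteq> bday_vars l X Y" "finite A2" "card A2 \<le> t" "\<Phi>2 \<in> assignments A2 (bday_dom SX SY)"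
    using i1 i2 by (auto simp: mem_las_index_iff)
  note pc_iff = pairwise_consistent_map_add_iff[OF A(4) A(8) c]
  show ?thesis
  proof (cases "pairwise_consistent A1 \<Phi>1 \<and> pairwise_consistent A2 \<Phi>2")
    case True
    then have idx: "(blocks_vars A1, glue A1 \<Phi>1) \<in> idx" "(blocks_vars A2, glue A2 \<Phi>2) \<in> idx"
      using glue_in_idx i1 i2 by auto
    show ?thesis
    proof (cases "consistent (glue A1 \<Phi>1) (glue A2 \<Phi>2)")
      case consistent: True
      have "card (A1 \<union> A2) \<le> 2 * t"
        using card_Un_le[of A1 A2] A by linarith
      then have "card (blocks_vars A1 \<union> blocks_vars A2) \<le> r"
        using blocks_vars_bounded[of "A1 \<union> A2"] A by (simp add: blocks_vars_Un)
      then show ?thesis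
        using True consistent pc_iff ip_consistent[OF idx consistent]
          glue_map_add[OF A(4) A(8) c] by (simp add: lift_def blocks_vars_Un)
    next
      case False
      then show ?thesis
        using True pc_iff ip_inconsistent[OF idx] by (simp add: lift_def)
    qed
  next
    case False
    then show ?thesis
      using pc_iff by (auto simp: lift_def)
  qed
qed

lemma ip_lift_nonneg:
  assumes "(A1, \<Phi>1) \<in> lift_idx" "(A2, \<Phi>2) \<in> lift_idx"
  shows "0 \<le> ip d (lift U A1 \<Phi>1) (lift U A2 \<Phi>2)"
  using ip_nonneg[OF glue_in_idx glue_in_idx] assms by (simp add: lift_def)

lemma ip_lift_inconsistent:
  assumes "(A1, \<Phi>1) \<in> lift_idx" "(A2, \<Phi>2) \<in> lift_idx" "\<not> consistent \<Phi>1 \<Phi>2"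
  shows "ip d (lift U A1 \<Phi>1) (lift U A2 \<Phi>2) = 0"
proof -
  have "ip d (U (blocks_vars A1) (glue A1 \<Phi>1)) (U (blocks_vars A2) (glue A2 \<Phi>2)) = 0"
    if "pairwise_consistent A1 \<Phi>1" "pairwise_consistent A2 \<Phi>2"
    using assms that glue_inconsistent[of \<Phi>1 A1 SX SY \<Phi>2 A2]
    by (intro ip_inconsistent glue_in_idx) (auto simp: mem_las_index_iff)
  then show ?thesis
    by (simp add: lift_def)
qed

lemma sum_mass_lift_singleton:
  assumes "u \<in> bday_vars l X Y"
  shows "(\<Sum>\<sigma>\<in>bday_dom SX SY u. ip d (lift U {u} [u \<mapsto> \<sigma>]) (lift U {u} [u \<mapsto> \<sigma>])) = 1"
proof -
  have "(\<Sum>\<sigma>\<in>bday_dom SX SY u. ip d (lift U {u} [u \<mapsto> \<sigma>]) (lift U {u} [u \<mapsto> \<sigma>]))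
      = (\<Sum>\<sigma>\<in>assignments (block_vars u) (game_dom SX SY). mass (block_vars u) \<sigma>)"
    by (simp add: lift_def glue_singleton bday_dom_eq blocks_vars_def)
  also have "\<dots> = 1"
    using blocks_vars_bounded[of "{u}"] assms t_pos by (intro sum_mass_eq_1) (auto simp: blocks_vars_def)
  finally show ?thesis .
qed

theorem lasserre_solution_lift: "lasserre_solution t (bday_vars l X Y) (bday_dom SX SY) d (lift U)"
  unfolding lasserre_solution_def
proof (intro conjI)
  show "\<forall>(A1, \<Phi>1)\<in>lift_idx. \<forall>(A2, \<Phi>2)\<in>lift_idx. 0 \<le> ip d (lift U A1 \<Phi>1) (lift U A2 \<Phi>2)"
    using ip_lift_nonneg by blast
  show "\<forall>(A1, \<Phi>1)\<in>lift_idx. \<forall>(A2, \<Phi>2)\<in>lift_idx. \<forall>(A3, \<Phi>3)\<in>lift_idx. \<forall>(A4, \<Phi>4)\<in>lift_idx.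
      A1 \<union> A2 = A3 \<union> A4 \<and> consistent \<Phi>1 \<Phi>2 \<and> consistent \<Phi>3 \<Phi>4 \<and> \<Phi>1 ++ \<Phi>2 = \<Phi>3 ++ \<Phi>4 \<longrightarrow>
      ip d (lift U A1 \<Phi>1) (lift U A2 \<Phi>2) = ip d (lift U A3 \<Phi>3) (lift U A4 \<Phi>4)"
    using ip_lift_consistent by auto
  show "\<forall>(A1, \<Phi>1)\<in>lift_idx. \<forall>(A2, \<Phi>2)\<in>lift_idx.
      \<not> consistent \<Phi>1 \<Phi>2 \<longrightarrow> ip d (lift U A1 \<Phi>1) (lift U A2 \<Phi>2) = 0"
    using ip_lift_inconsistent by blast
  show "\<forall>u\<in>bday_vars l X Y. (\<Sum>\<sigma>\<in>bday_dom SX SY u. ip d (lift U {u} [u \<mapsto> \<sigma>]) (lift U {u} [u \<mapsto> \<sigma>])) = 1"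
    using sum_mass_lift_singleton by blast
  show "ip d (lift U {} Map.empty) (lift U {} Map.empty) = 1"
    using mass_empty by (simp add: lift_def pairwise_consistent_def blocks_vars_def)
qed

end

section \<open>Value of the lifted solution\<close>

lemma set_pmf_bday_dist:
  assumes "finite X" "finite Y" "l \<le> card X" "l \<le> card Y"
  shows "set_pmf (bday_dist k l X Y) = {vs. length vs = k \<and> set vs \<subseteq> bday_vars l X Y}"
    and "finite (set_pmf (bday_dist k l X Y))"
proof -
  let ?C = "{vs. length vs = k \<and> set vs \<subseteq> bday_vars l X Y}"
  obtain S where "S \<subseteq> X" "card S = l"
    using obtain_subset_with_card_n[OF assms(3)] by blast
  moreover obtain T where "T \<subseteq> Y" "card T = l"
    using obtain_subset_with_card_n[OF assms(4)] by blast
  ultimately have "replicate k (S, T) \<in> ?C"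
    by (auto simp: bday_vars_def)
  moreover have "finite (bday_vars l X Y)"
    by (rule finite_subset[of _ "Pow X \<times> Pow Y"]) (use assms(1,2) in \<open>auto simp: bday_vars_def\<close>)
  then have fin: "finite ?C"
    using finite_lists_length_eq by (simp add: conj_commute)
  ultimately have "?C \<noteq> {}" "finite ?C"
    by blast+
  then show "set_pmf (bday_dist k l X Y) = ?C"
    unfolding bday_dist_def by simp
  with fin show "finite (set_pmf (bday_dist k l X Y))"
    by simp
qed

lemma finite_game_dom: "finite SX \<Longrightarrow> finite SY \<Longrightarrow> finite (game_dom SX SY v)"
  by (simp add: game_dom_def split: sum.splits)

lemma game_pred_restrict: "game_pred P q (\<phi> |` game_scope q) = game_pred P q \<phi>"
  by (simp add: game_pred_def game_scope_def)

locale lasserre_lift_game = lasserre_lift r X Y SX SY d U l t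
  for r :: nat and X :: "'x set" and Y :: "'y set" and SX :: "'a set" and SY :: "'b set" and d U l t +
  fixes Q :: "('x \<times> 'y) pmf" and P :: "'x \<Rightarrow> 'y \<Rightarrow> 'a \<Rightarrow> 'b \<Rightarrow> bool" and k :: nat
  assumes Q_support: "set_pmf Q \<subseteq> X \<times> Y" and finite_SX: "finite SX" and finite_SY: "finite SY"
    and l_pos: "1 \<le> l" and l_le_card: "l \<le> card X" "l \<le> card Y" and k_le_t: "k \<le> t"
begin

definition violation :: "'x \<times> 'y \<Rightarrow> real" where
  "violation q = (\<Sum>\<phi>\<in>assignments (game_scope q) (game_dom SX SY).
     (if game_pred P q \<phi> then 0 else 1) * mass (game_scope q) \<phi>)"

lemma violation_nonneg: "0 \<le> violation q"
  unfolding violation_def by (intro sum_nonneg) (simp add: ip_self_nonneg)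

lemma finite_set_pmf_Q: "finite (set_pmf Q)"
  using Q_support finite_X finite_Y finite_subset by blast

lemma sum_mass_game_scope:
  assumes "q \<in> set_pmf Q"
  shows "(\<Sum>\<phi>\<in>assignments (game_scope q) (game_dom SX SY). mass (game_scope q) \<phi>) = 1"
proof (rule sum_mass_eq_1)
  show "game_scope q \<subseteq> game_vars X Y"
    using assms Q_support by (auto simp: game_scope_def game_vars_def)
  show "finite (game_scope q)"
    by (simp add: game_scope_def)
  have "1 \<le> l * t"
    using mult_le_mono[OF l_pos t_pos] by simp
  moreover have "4 * (l * t) \<le> r"
    using level by (simp add: mult.assoc)
  moreover have "card (game_scope q) = 2"
    by (simp add: game_scope_def)
  ultimately show "card (game_scope q) \<le> r"
    by linarith
qed

lemma las_value_game:
  "las_value (game_dom SX SY) Q game_scope (game_pred P) d U = 1 - (\<Sum>q\<in>set_pmf Q. pmf Q q * violation q)"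
proof -
  have value_at: "(\<Sum>\<phi>\<in>assignments (game_scope q) (game_dom SX SY).
      mass (game_scope q) \<phi> * (if game_pred P q \<phi> then 1 else 0)) = 1 - violation q"
    if "q \<in> set_pmf Q" for q
  proof -
    have "(\<Sum>\<phi>\<in>assignments (game_scope q) (game_dom SX SY).
        mass (game_scope q) \<phi> * (if game_pred P q \<phi> then 1 else 0)) + violation q
      = (\<Sum>\<phi>\<in>assignments (game_scope q) (game_dom SX SY). mass (game_scope q) \<phi>)"
      unfolding violation_def sum.distrib[symmetric] by (intro sum.cong) auto
    then show ?thesis
      using sum_mass_game_scope[OF that] by simp
  qed
  have "las_value (game_dom SX SY) Q game_scope (game_pred P) d U = (\<Sum>q\<in>set_pmf Q. (1 - violation q) * pmf Q q)"
    unfolding las_value_def using finite_set_pmf_Q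
    by (subst integral_measure_pmf_real) (auto simp: value_at)
  also have "\<dots> = 1 - (\<Sum>q\<in>set_pmf Q. pmf Q q * violation q)"
    using sum_pmf_eq_1[OF finite_set_pmf_Q order_refl]
    by (simp add: algebra_simps sum_subtractf)
  finally show ?thesis .
qed

lemma finite_bday_assignments:
  assumes "A \<subseteq> bday_vars l X Y" "finite A"
  shows "finite (assignments A (bday_dom SX SY))"
proof (rule finite_assignments[OF assms(2)])
  fix u assume "u \<in> A"
  then have "finite (block_vars u)"
    using assms(1) bday_var_block_vars(2)[OF _ finite_X finite_Y] by blast
  then show "finite (bday_dom SX SY u)"
    unfolding bday_dom_eq by (intro finite_assignments finite_game_dom finite_SX finite_SY)
qed

definition covers :: "('x set \<times> 'y set) set \<Rightarrow> 'x \<times> 'y \<Rightarrow> bool" where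
  "covers A q \<longleftrightarrow> fst q \<in> (\<Union>u\<in>A. fst u) \<and> snd q \<in> (\<Union>u\<in>A. snd u)"

definition violated_mass ::
  "'x \<times> 'y \<Rightarrow> ('x set \<times> 'y set) set \<Rightarrow> (('x set \<times> 'y set) \<rightharpoonup> (('x + 'y) \<rightharpoonup> ('a + 'b))) \<Rightarrow> real" where
  "violated_mass q A \<Phi> =
     (if pairwise_consistent A \<Phi> \<and> covers A q \<and> \<not> game_pred P q (glue A \<Phi>)
      then mass (blocks_vars A) (glue A \<Phi>) else 0)"

lemma violated_mass_nonneg: "0 \<le> violated_mass q A \<Phi>"
  by (simp add: violated_mass_def ip_self_nonneg)

lemma mass_lift_pred_ge:
  "ip d (lift U (set vs) \<Phi>) (lift U (set vs) \<Phi>) * (if bday_pred Q P vs \<Phi> then 1 else 0)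
     \<ge> ip d (lift U (set vs) \<Phi>) (lift U (set vs) \<Phi>) - (\<Sum>q\<in>set_pmf Q. violated_mass q (set vs) \<Phi>)"
proof (cases "pairwise_consistent (set vs) \<Phi> \<and> \<not> bday_pred Q P vs \<Phi>")
  case True
  then obtain x y where q: "(x, y) \<in> set_pmf Q" "covers (set vs) (x, y)" "\<not> game_pred P (x, y) (glue (set vs) \<Phi>)"
    unfolding bday_pred_def pairwise_consistent_def covers_def combine_eq_glue by auto
  then have "violated_mass (x, y) (set vs) \<Phi> = mass (blocks_vars (set vs)) (glue (set vs) \<Phi>)"
    using True by (simp add: violated_mass_def)
  moreover have "violated_mass (x, y) (set vs) \<Phi> \<le> (\<Sum>q\<in>set_pmf Q. violated_mass q (set vs) \<Phi>)"
    using q(1) finite_set_pmf_Q violated_mass_nonneg by (intro member_le_sum) auto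
  ultimately have "mass (blocks_vars (set vs)) (glue (set vs) \<Phi>) \<le> (\<Sum>q\<in>set_pmf Q. violated_mass q (set vs) \<Phi>)"
    by simp
  then show ?thesis
    using True by (simp add: lift_def)
next
  case False
  then show ?thesis
    using sum_nonneg[of "set_pmf Q" "\<lambda>q. violated_mass q (set vs) \<Phi>"] violated_mass_nonneg
    by (auto simp: lift_def)
qed

text \<open>Gluing is injective on pairwise consistent assignments, so the violated masses of
  assignments to \<open>A\<close> add up to at most the mass that the game solution puts on assignments to
  \<open>blocks_vars A\<close> that violate \<open>q\<close>; marginalising to the scope of \<open>q\<close> gives \<open>violation q\<close>.\<close>

lemma sum_violated_mass_le:
  assumes A: "A \<subseteq> bday_vars l X Y" "finite A" "card A \<le> t" and q: "q \<in> set_pmf Q"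
  shows "(\<Sum>\<Phi>\<in>assignments A (bday_dom SX SY). violated_mass q A \<Phi>) \<le> violation q"
proof (cases "covers A q")
  case False
  then show ?thesis
    using violation_nonneg by (simp add: violated_mass_def)
next
  case True
  let ?As = "assignments A (bday_dom SX SY)"
  let ?Pc = "{\<Phi> \<in> ?As. pairwise_consistent A \<Phi>}"
  let ?G = "assignments (blocks_vars A) (game_dom SX SY)"
  define h where "h \<psi> = (if game_pred P q \<psi> then 0 else 1) * mass (blocks_vars A) \<psi>" for \<psi>
  have blocks: "blocks_vars A \<subseteq> game_vars X Y" "finite (blocks_vars A)" "card (blocks_vars A) \<le> r"
    using blocks_vars_bounded[OF A(1,2)] A(3) by auto
  have fin_As: "finite ?As"
    using A(1,2) by (rule finite_bday_assignments)
  have "(\<Sum>\<Phi>\<in>?As. violated_mass q A \<Phi>) = (\<Sum>\<Phi>\<in>?As. if pairwise_consistent A \<Phi> then h (glue A \<Phi>) else 0)"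
    using True by (intro sum.cong) (auto simp: violated_mass_def h_def)
  also have "\<dots> = (\<Sum>\<Phi>\<in>?Pc. h (glue A \<Phi>))"
    by (rule sum.inter_filter[OF fin_As, symmetric])
  also have "\<dots> = (\<Sum>\<psi>\<in>glue A ` ?Pc. h \<psi>)"
  proof -
    have "inj_on (glue A) ?Pc"
      using glue_inj by (intro inj_onI) blast
    then show ?thesis
      by (simp add: sum.reindex)
  qed
  also have "\<dots> \<le> (\<Sum>\<psi>\<in>?G. h \<psi>)"
    using glue_in_assignments finite_assignments[OF blocks(2) finite_game_dom[OF finite_SX finite_SY]]
    by (intro sum_mono2) (auto simp: h_def ip_self_nonneg)
  also have "\<dots> = (\<Sum>\<psi>\<in>?G. (if game_pred P q (\<psi> |` game_scope q) then 0 else 1) * mass (blocks_vars A) \<psi>)"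
    by (simp add: h_def game_pred_restrict)
  also have "\<dots> = violation q"
    unfolding violation_def using True blocks
    by (intro sum_mass_restrict) (auto simp: covers_def game_scope_def blocks_vars_def block_vars_def)
  finally show ?thesis .
qed

lemma las_value_lift_ge:
  "1 - (\<Sum>q\<in>set_pmf Q. violation q) \<le> las_value (bday_dom SX SY) (bday_dist k l X Y) bday_scope (bday_pred Q P) d (lift U)"
  unfolding las_value_def bday_scope_def
proof (intro measure_pmf.integral_ge_const integrable_measure_pmf_finite)
  note dist = set_pmf_bday_dist[OF finite_X finite_Y l_le_card, of k]
  show "finite (set_pmf (bday_dist k l X Y))"
    using dist(2) .
  have "1 - (\<Sum>q\<in>set_pmf Q. violation q)
      \<le> (\<Sum>\<Phi>\<in>assignments (set vs) (bday_dom SX SY). ip d (lift U (set vs) \<Phi>) (lift U (set vs) \<Phi>) * (if bday_pred Q P vs \<Phi> then 1 else 0))"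
    if vs: "length vs = k" "set vs \<subseteq> bday_vars l X Y" for vs
  proof -
    let ?As = "assignments (set vs) (bday_dom SX SY)"
    have card: "card (set vs) \<le> t"
      using card_length[of vs] vs k_le_t by linarith
    have "(\<Sum>\<Phi>\<in>?As. ip d (lift U (set vs) \<Phi>) (lift U (set vs) \<Phi>)) = 1"
      using lasserre.sum_mass_eq_1[OF lasserre.intro[OF lasserre_solution_lift]] vs card by auto
    moreover have "(\<Sum>q\<in>set_pmf Q. \<Sum>\<Phi>\<in>?As. violated_mass q (set vs) \<Phi>) \<le> (\<Sum>q\<in>set_pmf Q. violation q)"
      using vs card by (intro sum_mono sum_violated_mass_le) auto
    moreover have "(\<Sum>\<Phi>\<in>?As. ip d (lift U (set vs) \<Phi>) (lift U (set vs) \<Phi>) - (\<Sum>q\<in>set_pmf Q. violated_mass q (set vs) \<Phi>))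
        \<le> (\<Sum>\<Phi>\<in>?As. ip d (lift U (set vs) \<Phi>) (lift U (set vs) \<Phi>) * (if bday_pred Q P vs \<Phi> then 1 else 0))"
      by (intro sum_mono mass_lift_pred_ge)
    ultimately show ?thesis
      by (simp add: sum_subtractf sum.swap[of _ "set_pmf Q"])
  qed
  then show "AE vs in measure_pmf (bday_dist k l X Y). 1 - (\<Sum>q\<in>set_pmf Q. violation q)
      \<le> (\<Sum>\<Phi>\<in>assignments (set vs) (bday_dom SX SY). ip d (lift U (set vs) \<Phi>) (lift U (set vs) \<Phi>) * (if bday_pred Q P vs \<Phi> then 1 else 0))"
    by (simp add: AE_measure_pmf_iff dist(1))
qed

end

context lasserre_lift_game
begin

lemma las_value_lift_ge_game:
  assumes "0 < m" and "\<And>q. q \<in> set_pmf Q \<Longrightarrow> m \<le> pmf Q q"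
  shows "1 - (1 - las_value (game_dom SX SY) Q game_scope (game_pred P) d U) / m
    \<le> las_value (bday_dom SX SY) (bday_dist k l X Y) bday_scope (bday_pred Q P) d (lift U)"
proof -
  have "m * (\<Sum>q\<in>set_pmf Q. violation q) \<le> (\<Sum>q\<in>set_pmf Q. pmf Q q * violation q)"
    unfolding sum_distrib_left using assms(2) violation_nonneg by (intro sum_mono mult_right_mono) auto
  then have "(\<Sum>q\<in>set_pmf Q. violation q) \<le> (1 - las_value (game_dom SX SY) Q game_scope (game_pred P) d U) / m"
    using assms(1) by (simp add: las_value_game field_simps)
  then show ?thesis
    using las_value_lift_ge by linarith
qed

end

lemma Sup_eq_1_if_approximated:
  fixes S :: "real set"
  assumes "\<And>x. x \<in> S \<Longrightarrow> x \<le> 1" and "\<And>\<epsilon>. 0 < \<epsilon> \<Longrightarrow> \<exists>x\<in>S. 1 - \<epsilon> < x"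
  shows "Sup S = 1"
proof (rule cSup_eq)
  show "x \<le> 1" if "x \<in> S" for x
    using assms(1) that .
  show "1 \<le> y" if "\<And>x. x \<in> S \<Longrightarrow> x \<le> y" for y
  proof (rule ccontr)
    assume "\<not> 1 \<le> y"
    then obtain x where "x \<in> S" "y < x"
      using assms(2)[of "1 - y"] by auto
    with that show False
      by fastforce
  qed
qed

lemma pmf_lower_bound:
  assumes "finite (set_pmf Q)"
  obtains m where "0 < m" "\<And>q. q \<in> set_pmf Q \<Longrightarrow> m \<le> pmf Q q"
proof
  show "0 < Min (pmf Q ` set_pmf Q)"
    using assms set_pmf_not_empty[of Q] by (auto simp: Min_gr_iff pmf_positive)
  show "Min (pmf Q ` set_pmf Q) \<le> pmf Q q" if "q \<in> set_pmf Q" for q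
    using assms that by (auto intro: Min_le)
qed

lemma game_solution_exists:
  assumes "two_prover_game X Y Q SX SY"
  obtains d U where "lasserre_solution r (game_vars X Y) (game_dom SX SY) d U"
proof -
  have "finite (game_dom SX SY v) \<and> game_dom SX SY v \<noteq> {}" for v
    using assms by (simp add: two_prover_game_def game_dom_def split: sum.splits)
  then show ?thesis
    using lasserre_solution_exists[of "game_vars X Y" "game_dom SX SY" r] that by blast
qed

lemma lasserre_lift_gameI:
  assumes "two_prover_game X Y Q SX SY" "1 \<le> l" "1 \<le> t" "k \<le> t" "4 * l * t \<le> r"
    "l \<le> card X" "l \<le> card Y" "lasserre_solution r (game_vars X Y) (game_dom SX SY) d U"
  shows "lasserre_lift_game r X Y SX SY d U l t Q k"
  using assms unfolding two_prover_game_def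
  by (intro lasserre_lift_game.intro lasserre_lift.intro lasserre.intro lasserre_lift_axioms.intro
      lasserre_lift_game_axioms.intro) auto

lemma las_value_bday_le_1:
  assumes "lasserre_solution t (bday_vars l X Y) (bday_dom SX SY) d U"
    and "finite X" "finite Y" "l \<le> card X" "l \<le> card Y" "k \<le> t"
  shows "las_value (bday_dom SX SY) (bday_dist k l X Y) bday_scope (bday_pred Q P) d U \<le> 1"
proof -
  interpret lasserre t "bday_vars l X Y" "bday_dom SX SY" d U
    using assms(1) by (rule lasserre.intro)
  show ?thesis
    using card_length assms(6) set_pmf_bday_dist[OF assms(2-5)]
    by (intro value_le_1) (auto simp: bday_scope_def intro: order_trans)
qed

lemma opt_las_bday_eq_1:
  assumes game: "two_prover_game X Y Q SX SY" and "1 \<le> l" "1 \<le> t" "k \<le> t" "4 * l * t \<le> r"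
    "l \<le> card X" "l \<le> card Y" and opt: "opt_las_game r X Y Q SX SY P = 1"
  shows "opt_las_bday t k l X Y Q SX SY P = 1"
proof -
  let ?game_values = "{las_value (game_dom SX SY) Q game_scope (game_pred P) d U | d U.
    lasserre_solution r (game_vars X Y) (game_dom SX SY) d U}"
  let ?lift_value = "las_value (bday_dom SX SY) (bday_dist k l X Y) bday_scope (bday_pred Q P)"
  obtain d0 U0 where "lasserre_solution r (game_vars X Y) (game_dom SX SY) d0 U0"
    using game_solution_exists[OF game] .
  then interpret L0: lasserre_lift_game r X Y SX SY d0 U0 l t Q P k
    using assms by (intro lasserre_lift_gameI)
  obtain m where m: "0 < m" "\<And>q. q \<in> set_pmf Q \<Longrightarrow> m \<le> pmf Q q"
    using pmf_lower_bound[OF L0.finite_set_pmf_Q] by blast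
  show ?thesis
    unfolding opt_las_bday_def opt_las_def
  proof (rule Sup_eq_1_if_approximated)
    fix x assume "x \<in> {?lift_value d U |d U. lasserre_solution t (bday_vars l X Y) (bday_dom SX SY) d U}"
    then show "x \<le> 1"
      using las_value_bday_le_1 L0.finite_X L0.finite_Y assms(4,6,7) by blast
  next
    fix \<epsilon> :: real assume "0 < \<epsilon>"
    then have "1 - \<epsilon> * m < Sup ?game_values"
      using opt m(1) by (simp add: opt_las_game_def opt_las_def)
    then obtain d U where sol: "lasserre_solution r (game_vars X Y) (game_dom SX SY) d U"
      and close: "1 - \<epsilon> * m < las_value (game_dom SX SY) Q game_scope (game_pred P) d U"
      using less_cSupD[of ?game_values] L0.solution by blast
    interpret L: lasserre_lift_game r X Y SX SY d U l t Q P k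
      using assms sol by (intro lasserre_lift_gameI)
    have "1 - \<epsilon> < 1 - (1 - las_value (game_dom SX SY) Q game_scope (game_pred P) d U) / m"
      using close m(1) by (simp add: field_simps)
    also have "\<dots> \<le> ?lift_value d (lift U)"
      using m by (rule L.las_value_lift_ge_game)
    finally show "\<exists>x\<in>{?lift_value d U |d U. lasserre_solution t (bday_vars l X Y) (bday_dom SX SY) d U}. 1 - \<epsilon> < x"
      using L.lasserre_solution_lift by blast
  qed
qed

lemma four_mult_nat_floor_le: "4 * l * nat \<lfloor>1 / 4 * real r / real l\<rfloor> \<le> r"
proof (cases "l = 0")
  case False
  define x where "x = 1 / 4 * real r / real l"
  have "real (4 * l * nat \<lfloor>x\<rfloor>) = 4 * real l * real (nat \<lfloor>x\<rfloor>)"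
    by simp
  also have "\<dots> \<le> 4 * real l * x"
    unfolding x_def by (intro mult_left_mono) simp_all
  also have "\<dots> = real r"
    using False by (simp add: x_def)
  finally show ?thesis
    unfolding x_def by linarith
qed simp

theorem corollary4p13:
  "\<exists>c::real. c > 0 \<and>
     (\<forall>(X::'x set) (Y::'y set) (Q::('x \<times> 'y) pmf) (SX::'a set) (SY::'b set)
        (P::'x \<Rightarrow> 'y \<Rightarrow> 'a \<Rightarrow> 'b \<Rightarrow> bool) (k::nat) (l::nat) (r::nat).
        two_prover_game X Y Q SX SY \<and> k \<ge> 2 \<and> l \<ge> 1 \<and>
        k * l \<le> card X \<and> k * l \<le> card Y \<and> r \<ge> k * l \<and>
        opt_las_game r X Y Q SX SY P = 1 \<and>
        k \<le> nat \<lfloor>c * real r / real l\<rfloor>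
        \<longrightarrow> opt_las_bday (nat \<lfloor>c * real r / real l\<rfloor>) k l X Y Q SX SY P = 1)"
proof (intro exI[of _ "1 / 4"] conjI allI impI)
  fix X :: "'x set" and Y :: "'y set" and Q :: "('x \<times> 'y) pmf" and SX :: "'a set" and SY :: "'b set"
    and P :: "'x \<Rightarrow> 'y \<Rightarrow> 'a \<Rightarrow> 'b \<Rightarrow> bool" and k l r :: nat
  assume H: "two_prover_game X Y Q SX SY \<and> k \<ge> 2 \<and> l \<ge> 1 \<and>
    k * l \<le> card X \<and> k * l \<le> card Y \<and> r \<ge> k * l \<and>
    opt_las_game r X Y Q SX SY P = 1 \<and> k \<le> nat \<lfloor>1 / 4 * real r / real l\<rfloor>"
  have "l \<le> k * l"
    using H by simp
  then have "l \<le> card X" "l \<le> card Y"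
    using H by (meson order_trans)+
  then show "opt_las_bday (nat \<lfloor>1 / 4 * real r / real l\<rfloor>) k l X Y Q SX SY P = 1"
    using H four_mult_nat_floor_le[of l r] by (intro opt_las_bday_eq_1) auto
qed simp

end
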